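(* Let $m=m(n)$ and $p=p(n)\in(0,1)$, let $N_E$ be the number of edges of $\mathcal G(n,m,p)$ and $\hat p=1-(1-p^2)^m$. If $\widetilde N_E=(N_E-\mathbb E[N_E])/\sqrt{\operatorname{Var}[N_E]}$ converges in distribution to a standard normal random variable as $n\to\infty$, then $n^2\hat p(1-\hat p)\to\infty$.
   Context: Random intersection graph $\mathcal G(n,m,p)$: vertices $v_1,\ldots,v_n$, attributes $a_1,\ldots,a_m$; each vertex chooses each attribute independently with probability $p$; two vertices are adjacent iff they chose at least one common attribute. *)

theory Defs
  imports "HOL-Probability.Probability"
begin

text \<open>Random intersection graph G(n,m,p): vertices 0..n-1, attributes 0..m-1.
  An outcome is a function w :: nat \<times> nat \<Rightarrow> bool, w (i,a) meaning vertex i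
  chose attribute a; all choices in {..<n} \<times> {..<m} are independent Bernoulli(p).\<close>

definition RIG :: "nat \<Rightarrow> nat \<Rightarrow> real \<Rightarrow> (nat \<times> nat \<Rightarrow> bool) pmf" where
  "RIG n m p = Pi_pmf ({..<n} \<times> {..<m}) False (\<lambda>_. bernoulli_pmf p)"

definition rig_adj :: "nat \<Rightarrow> (nat \<times> nat \<Rightarrow> bool) \<Rightarrow> nat \<Rightarrow> nat \<Rightarrow> bool" where
  "rig_adj m w u v \<longleftrightarrow> u \<noteq> v \<and> (\<exists>a<m. w (u,a) \<and> w (v,a))"

definition num_edges :: "nat \<Rightarrow> nat \<Rightarrow> (nat \<times> nat \<Rightarrow> bool) \<Rightarrow> nat" where
  "num_edges n m w = card {(u,v). u < v \<and> v < n \<and> rig_adj m w u v}"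

end

theory Submission
  imports Defs
begin

text \<open>
  The edge count N is integer valued, so its normalisation (N - \<mu>) / \<sigma> lives on a lattice of
  mesh 1 / \<sigma>. The normal distribution function is continuous and strictly increasing, so for
  every \<delta> > 0 the distribution functions of the normalisations eventually increase on both
  (0, \<delta>] and (\<delta>, 2\<delta>]; this needs two lattice points at distance less than 2\<delta>, i.e.
  \<sigma> > 1 / (2\<delta>). Hence \<sigma> \<rightarrow> \<infinity>.

  On the other hand 0 \<le> N \<le> T, where T \<le> n^2 is the number of vertex pairs, and \<mu> = T ph because
  every pair is adjacent with probability ph. As the limit law charges both (-\<infinity>, -1] and
  (1, \<infinity>), eventually N takes a value \<le> \<mu> - \<sigma> and one > \<mu> + \<sigma>, whence
  \<sigma> \<le> T min(ph, 1 - ph) \<le> 2 n^2 ph (1 - ph). No variance needs to be computed.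
\<close>

lemma null_sets_std_normal_distribution:
  "A \<in> null_sets std_normal_distribution \<longleftrightarrow> A \<in> null_sets lborel"
proof -
  have "x \<in> A \<longrightarrow> std_normal_density x = 0 \<longleftrightarrow> x \<notin> A" for x
    using normal_density_pos[of 1 0 x] by auto
  then have "A \<in> null_sets std_normal_distribution \<longleftrightarrow> A \<in> sets lborel \<and> (AE x in lborel. x \<notin> A)"
    by (simp add: null_sets_density_iff)
  also have "\<dots> \<longleftrightarrow> A \<in> null_sets lborel"
    using AE_iff_null_sets[of A lborel] null_setsD2[of A lborel] by blast
  finally show ?thesis .
qed

interpretation std_normal: real_distribution std_normal_distribution
  by (rule real_dist_normal_dist)

lemma isCont_std_normal_cdf: "isCont (cdf std_normal_distribution) x"
proof -
  have "{x} \<in> null_sets lborel"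
    using AE_lborel_singleton[of x] AE_iff_null_sets[of "{x}" lborel] by simp
  then show ?thesis
    by (simp add: std_normal.isCont_cdf measure_eq_0_null_sets null_sets_std_normal_distribution)
qed

lemma strict_mono_std_normal_cdf: "strict_mono (cdf std_normal_distribution)"
proof
  fix a b :: real
  assume "a < b"
  then have "{a<..b} \<notin> null_sets lborel"
    by (auto simp: null_sets_def)
  then have "{a<..b} \<notin> null_sets std_normal_distribution"
    unfolding null_sets_std_normal_distribution .
  then have "measure std_normal_distribution {a<..b} \<noteq> 0"
    using std_normal.emeasure_eq_measure[of "{a<..b}"] by (auto simp: null_sets_def)
  then show "cdf std_normal_distribution a < cdf std_normal_distribution b"
    using std_normal.cdf_diff_eq[OF \<open>a < b\<close>] measure_nonneg[of std_normal_distribution "{a<..b}"]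
    by linarith
qed

lemma std_normal_cdf_bounds: "0 < cdf std_normal_distribution x" "cdf std_normal_distribution x < 1"
  using strict_mono_less[OF strict_mono_std_normal_cdf, of "x - 1" x]
    strict_mono_less[OF strict_mono_std_normal_cdf, of x "x + 1"]
    std_normal.cdf_nonneg[of "x - 1"] std_normal.cdf_bounded_prob[of "x + 1"]
  by simp_all

lemma cdf_distr_measure_pmf:
  "cdf (distr (measure_pmf M) borel (Y :: 'a \<Rightarrow> real)) x = measure_pmf.prob M {w. Y w \<le> x}"
  unfolding cdf_def2 by (subst measure_distr) (auto simp: vimage_def)

lemma measure_pmf_prob_less_obtain:
  assumes "measure_pmf.prob M A < measure_pmf.prob M B"
  obtains x where "x \<in> B" "x \<notin> A"
  using assms measure_pmf.finite_measure_mono[of B A M] by fastforce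

lemma measure_pair_pmf_Times:
  "measure_pmf.prob (pair_pmf M N) (A \<times> B) = measure_pmf.prob M A * measure_pmf.prob N B"
proof -
  have "measure_pmf.prob (pair_pmf M N) (A \<times> B) =
      measure_pmf.prob (pair_pmf M N) ((A \<inter> set_pmf M) \<times> (B \<inter> set_pmf N))"
    by (subst measure_Int_set_pmf[symmetric]) (auto intro: arg_cong[where f = "measure _"])
  also have "\<dots> = measure_pmf.prob M (A \<inter> set_pmf M) * measure_pmf.prob N (B \<inter> set_pmf N)"
    by (intro measure_pmf_prob_product) (auto intro: countable_subset)
  finally show ?thesis
    by (simp add: measure_Int_set_pmf)
qed

lemma measure_Pi_pmf_subset:
  assumes "finite I" "J \<subseteq> I"
    and E_local: "\<And>f g. (\<forall>x\<in>J. f x = g x) \<Longrightarrow> f \<in> E \<longleftrightarrow> g \<in> E"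
  shows "measure_pmf.prob (Pi_pmf I d q) E = measure_pmf.prob (Pi_pmf J d q) E"
proof -
  have "(\<lambda>x. if x \<in> J then f x else d) \<in> E \<longleftrightarrow> f \<in> E" for f
    by (rule E_local) simp
  then have "(\<lambda>f x. if x \<in> J then f x else d) -` E = E"
    by auto
  then show ?thesis
    using Pi_pmf_subset[OF assms(1,2), of d q] by simp
qed

lemma measure_Pi_pmf_union:
  assumes "finite A" "finite B" "A \<inter> B = {}"
    and E_local: "\<And>f g. (\<forall>x\<in>A. f x = g x) \<Longrightarrow> f \<in> E \<longleftrightarrow> g \<in> E"
    and F_local: "\<And>f g. (\<forall>x\<in>B. f x = g x) \<Longrightarrow> f \<in> F \<longleftrightarrow> g \<in> F"
  shows "measure_pmf.prob (Pi_pmf (A \<union> B) d q) (E \<inter> F) =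
    measure_pmf.prob (Pi_pmf A d q) E * measure_pmf.prob (Pi_pmf B d q) F"
proof -
  let ?h = "\<lambda>(f, g) x. if x \<in> A then f x else g x"
  have "?h (f, g) \<in> E \<longleftrightarrow> f \<in> E" "?h (f, g) \<in> F \<longleftrightarrow> g \<in> F" for f g
    using \<open>A \<inter> B = {}\<close> by (auto intro!: E_local F_local)
  then have "?h -` (E \<inter> F) = E \<times> F"
    by auto
  then show ?thesis
    using Pi_pmf_union[OF assms(1-3), of d q] by (simp add: measure_pair_pmf_Times)
qed

lemma measure_Pi_pmf_bernoulli_not_both:
  assumes "x \<noteq> y" "0 \<le> p" "p \<le> 1"
  shows "measure_pmf.prob (Pi_pmf {x, y} d (\<lambda>_. bernoulli_pmf p)) {w. \<not> (w x \<and> w y)} = 1 - p\<^sup>2"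
proof -
  let ?M = "Pi_pmf {x, y} d (\<lambda>_. bernoulli_pmf p)"
  have "{w. \<not> (w x \<and> w y)} = space ?M - Pi {x, y} (\<lambda>_. {True})"
    by auto
  then have "measure_pmf.prob ?M {w. \<not> (w x \<and> w y)} = 1 - measure_pmf.prob ?M (Pi {x, y} (\<lambda>_. {True}))"
    by (simp only: measure_pmf.prob_compl sets_measure_pmf UNIV_I)
  also have "measure_pmf.prob ?M (Pi {x, y} (\<lambda>_. {True})) = p\<^sup>2"
    using assms by (simp add: measure_Pi_pmf_Pi measure_pmf_single power2_eq_square)
  finally show ?thesis .
qed

lemma measure_Pi_pmf_no_common_attribute:
  assumes "u \<noteq> v" "finite A" "0 \<le> p" "p \<le> 1"
  shows "measure_pmf.prob (Pi_pmf ({u, v} \<times> A) d (\<lambda>_. bernoulli_pmf p))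
    {w. \<forall>a\<in>A. \<not> (w (u, a) \<and> w (v, a))} = (1 - p\<^sup>2) ^ card A"
  using \<open>finite A\<close>
proof (induction A rule: finite_induct)
  case (insert a A)
  let ?M = "\<lambda>I. Pi_pmf I d (\<lambda>_. bernoulli_pmf p)"
  let ?N = "\<lambda>A. {w. \<forall>a\<in>A. \<not> (w (u, a) \<and> w (v, a))}"
  let ?G = "{w. \<not> (w (u, a) \<and> w (v, a))}"
  have "{u, v} \<times> insert a A = {u, v} \<times> A \<union> {(u, a), (v, a)}" "?N (insert a A) = ?N A \<inter> ?G"
    by auto
  then have "measure_pmf.prob (?M ({u, v} \<times> insert a A)) (?N (insert a A)) =
      measure_pmf.prob (?M ({u, v} \<times> A \<union> {(u, a), (v, a)})) (?N A \<inter> ?G)"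
    by (simp only:)
  also have "\<dots> = measure_pmf.prob (?M ({u, v} \<times> A)) (?N A) * measure_pmf.prob (?M {(u, a), (v, a)}) ?G"
    by (rule measure_Pi_pmf_union) (use insert in auto)
  also have "\<dots> = (1 - p\<^sup>2) ^ card A * (1 - p\<^sup>2)"
    by (subst measure_Pi_pmf_bernoulli_not_both) (use insert assms in auto)
  finally show ?case
    using insert by simp
qed simp

lemma Ints_normalized_gap:
  fixes a b \<mu> \<sigma> :: real
  assumes "a \<in> \<int>" "b \<in> \<int>" "0 \<le> \<sigma>" "(a - \<mu>) / \<sigma> < (b - \<mu>) / \<sigma>"
  shows "0 < \<sigma>" "1 / \<sigma> \<le> (b - \<mu>) / \<sigma> - (a - \<mu>) / \<sigma>"
proof -
  show "0 < \<sigma>"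
    \<comment> \<open>for \<sigma> = 0 both normalised values are 0, as x / 0 = 0\<close>
    using assms(3,4) by (cases "\<sigma> = 0") auto
  then have "a < b"
    using assms(4) by (simp add: divide_strict_right_mono_neg field_simps)
  moreover obtain i j where "a = of_int i" "b = of_int j"
    using assms(1,2) by (auto elim!: Ints_cases)
  ultimately have "1 \<le> b - a"
    by simp
  then show "1 / \<sigma> \<le> (b - \<mu>) / \<sigma> - (a - \<mu>) / \<sigma>"
    using \<open>0 < \<sigma>\<close> by (simp add: diff_divide_distrib[symmetric] divide_right_mono)
qed

lemma filterlim_lattice_normalizer_at_top:
  fixes Q :: "nat \<Rightarrow> 'a pmf" and X :: "nat \<Rightarrow> 'a \<Rightarrow> real" and \<mu> \<sigma> :: "nat \<Rightarrow> real"
  assumes lattice: "\<And>n w. X n w \<in> \<int>" and nonneg: "\<And>n. 0 \<le> \<sigma> n"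
    and conv: "\<And>x. (\<lambda>n. measure_pmf.prob (Q n) {w. (X n w - \<mu> n) / \<sigma> n \<le> x}) \<longlonglongrightarrow> \<Phi> x"
    and mono: "strict_mono \<Phi>"
  shows "filterlim \<sigma> at_top sequentially"
  unfolding filterlim_at_top
proof
  fix Z :: real
  define c where "c = \<bar>Z\<bar> + 1"
  define \<delta> where "\<delta> = 1 / (2 * c)"
  have "0 < c"
    by (simp add: c_def add_pos_nonneg)
  then have "0 < \<delta>" "2 * \<delta> = 1 / c"
    by (simp_all add: \<delta>_def)
  define Y where "Y n w = (X n w - \<mu> n) / \<sigma> n" for n w
  define F where "F n x = measure_pmf.prob (Q n) {w. Y n w \<le> x}" for n x
  have "eventually (\<lambda>n. F n a < F n b) sequentially" if "a < b" for a b
  proof -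
    have "(\<lambda>n. F n b - F n a) \<longlonglongrightarrow> \<Phi> b - \<Phi> a"
      using conv by (intro tendsto_diff) (simp_all add: F_def Y_def)
    moreover have "0 < \<Phi> b - \<Phi> a"
      using mono that by (simp add: strict_mono_less)
    ultimately have "eventually (\<lambda>n. 0 < F n b - F n a) sequentially"
      by (rule order_tendstoD(1))
    then show ?thesis
      by (rule eventually_mono) simp
  qed
  then have "eventually (\<lambda>n. F n 0 < F n \<delta> \<and> F n \<delta> < F n (2 * \<delta>)) sequentially"
    using \<open>0 < \<delta>\<close> by (intro eventually_conj) auto
  then show "eventually (\<lambda>n. Z \<le> \<sigma> n) sequentially"
  proof (rule eventually_mono)
    fix n
    assume "F n 0 < F n \<delta> \<and> F n \<delta> < F n (2 * \<delta>)"
    then have "F n 0 < F n \<delta>" "F n \<delta> < F n (2 * \<delta>)"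
      by simp_all
    then obtain w1 w2 where "w1 \<in> {w. Y n w \<le> \<delta>}" "w1 \<notin> {w. Y n w \<le> 0}"
      and "w2 \<in> {w. Y n w \<le> 2 * \<delta>}" "w2 \<notin> {w. Y n w \<le> \<delta>}"
      unfolding F_def by (elim measure_pmf_prob_less_obtain)
    then have w1: "0 < Y n w1" "Y n w1 \<le> \<delta>" and w2: "\<delta> < Y n w2" "Y n w2 \<le> 2 * \<delta>"
      by auto
    have "Y n w1 < Y n w2"
      using w1 w2 by simp
    from Ints_normalized_gap[OF lattice lattice nonneg this[unfolded Y_def]]
    have "0 < \<sigma> n" "1 / \<sigma> n \<le> Y n w2 - Y n w1"
      unfolding Y_def by simp_all
    moreover have "Y n w2 - Y n w1 < 1 / c"
      using w1 w2 \<open>2 * \<delta> = 1 / c\<close> by linarith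
    ultimately have "inverse (\<sigma> n) < inverse c"
      by (simp add: inverse_eq_divide)
    then have "c < \<sigma> n"
      using \<open>0 < \<sigma> n\<close> \<open>0 < c\<close> by (simp add: inverse_less_iff_less)
    then show "Z \<le> \<sigma> n"
      by (simp add: c_def)
  qed
qed

lemma eventually_normalized_tails:
  fixes Q :: "nat \<Rightarrow> 'a pmf" and Y :: "nat \<Rightarrow> 'a \<Rightarrow> real"
  assumes conv: "\<And>x. (\<lambda>n. measure_pmf.prob (Q n) {w. Y n w \<le> x}) \<longlonglongrightarrow> \<Phi> x"
    and "0 < \<Phi> (-1)" "\<Phi> 1 < 1"
  shows "eventually (\<lambda>n. (\<exists>w. Y n w \<le> -1) \<and> (\<exists>w. 1 < Y n w)) sequentially"
proof -
  have "eventually (\<lambda>n. 0 < measure_pmf.prob (Q n) {w. Y n w \<le> -1} \<and>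
      measure_pmf.prob (Q n) {w. Y n w \<le> 1} < 1) sequentially"
    using conv assms(2,3) by (intro eventually_conj order_tendstoD)
  then show ?thesis
  proof (rule eventually_mono)
    fix n
    assume "0 < measure_pmf.prob (Q n) {w. Y n w \<le> -1} \<and> measure_pmf.prob (Q n) {w. Y n w \<le> 1} < 1"
    then have "measure_pmf.prob (Q n) {} < measure_pmf.prob (Q n) {w. Y n w \<le> -1}"
      "measure_pmf.prob (Q n) {w. Y n w \<le> 1} < measure_pmf.prob (Q n) UNIV"
      by simp_all
    then obtain w1 w2 where "w1 \<in> {w. Y n w \<le> -1}" "w1 \<notin> {}"
      and "w2 \<in> UNIV" "w2 \<notin> {w. Y n w \<le> 1}"
      by (elim measure_pmf_prob_less_obtain)
    then show "(\<exists>w. Y n w \<le> -1) \<and> (\<exists>w. 1 < Y n w)"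
      by (auto simp: not_le)
  qed
qed

lemma normalizer_le_of_tails:
  fixes x y \<mu> \<sigma> T :: real
  assumes "0 \<le> \<sigma>" "0 \<le> x" "y \<le> T" "(x - \<mu>) / \<sigma> \<le> -1" "1 < (y - \<mu>) / \<sigma>"
  shows "\<sigma> \<le> min \<mu> (T - \<mu>)"
proof -
  have "0 < \<sigma>"
    using assms(1,4) by (cases "\<sigma> = 0") auto
  then show ?thesis
    using assms(2-5) by (simp add: field_simps)
qed

lemma min_le_twice_mult_compl:
  fixes x :: real
  assumes "0 \<le> x" "x \<le> 1"
  shows "min x (1 - x) \<le> 2 * x * (1 - x)"
proof (cases "x \<le> 1 / 2")
  case True
  then have "0 \<le> x * (1 - 2 * x)"
    using assms by simp
  then show ?thesis
    by (simp add: min_def algebra_simps)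
next
  case False
  then have "0 \<le> (1 - x) * (2 * x - 1)"
    using assms by simp
  then show ?thesis
    by (simp add: min_def algebra_simps)
qed

definition vertex_pairs :: "nat \<Rightarrow> (nat \<times> nat) set" where
  "vertex_pairs n = {(u, v). u < v \<and> v < n}"

lemma vertex_pairs_subset: "vertex_pairs n \<subseteq> {..<n} \<times> {..<n}"
  by (auto simp: vertex_pairs_def)

lemma finite_vertex_pairs [simp]: "finite (vertex_pairs n)"
  using vertex_pairs_subset by (rule finite_subset) simp

lemma card_vertex_pairs_le: "card (vertex_pairs n) \<le> n^2"
  using card_mono[OF _ vertex_pairs_subset, of n] by (simp add: power2_eq_square)

lemma num_edges_eq_card: "num_edges n m w = card {(u, v) \<in> vertex_pairs n. rig_adj m w u v}"
  unfolding num_edges_def vertex_pairs_def by (rule arg_cong[where f = card]) auto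

lemma num_edges_le_card_vertex_pairs: "num_edges n m w \<le> card (vertex_pairs n)"
  unfolding num_edges_eq_card by (rule card_mono) auto

lemma measure_RIG_adj:
  fixes p :: real
  assumes "u < n" "v < n" "u \<noteq> v" "0 \<le> p" "p \<le> 1"
  shows "measure_pmf.prob (RIG n m p) {w. rig_adj m w u v} = 1 - (1 - p\<^sup>2) ^ m"
proof -
  let ?N = "{w. \<forall>a\<in>{..<m}. \<not> (w (u, a) \<and> w (v, a))}"
  have "measure_pmf.prob (RIG n m p) ?N =
      measure_pmf.prob (Pi_pmf ({u, v} \<times> {..<m}) False (\<lambda>_. bernoulli_pmf p)) ?N"
    unfolding RIG_def by (rule measure_Pi_pmf_subset) (use assms in auto)
  also have "\<dots> = (1 - p\<^sup>2) ^ m"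
    using measure_Pi_pmf_no_common_attribute[OF \<open>u \<noteq> v\<close> _ assms(4,5), of "{..<m}"] by simp
  moreover have "{w. rig_adj m w u v} = space (measure_pmf (RIG n m p)) - ?N"
    using \<open>u \<noteq> v\<close> by (auto simp: rig_adj_def)
  ultimately show ?thesis
    by (simp only: measure_pmf.prob_compl sets_measure_pmf UNIV_I)
qed

lemma num_edges_eq_sum_indicator:
  "real (num_edges n m w) = (\<Sum>x\<in>vertex_pairs n. indicator {w. rig_adj m w (fst x) (snd x)} w)"
proof -
  have "{(u, v) \<in> vertex_pairs n. rig_adj m w u v} = vertex_pairs n \<inter> {x. rig_adj m w (fst x) (snd x)}"
    by auto
  then show ?thesis
    by (simp add: num_edges_eq_card indicator_def)
qed

lemma expectation_num_edges:
  fixes p :: real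
  assumes "0 \<le> p" "p \<le> 1"
  shows "measure_pmf.expectation (RIG n m p) (\<lambda>w. real (num_edges n m w)) =
    card (vertex_pairs n) * (1 - (1 - p\<^sup>2) ^ m)"
proof -
  let ?A = "\<lambda>x. {w. rig_adj m w (fst x) (snd x)}"
  have "measure_pmf.expectation (RIG n m p) (\<lambda>w. real (num_edges n m w)) =
      (\<Sum>x\<in>vertex_pairs n. measure_pmf.expectation (RIG n m p) (indicator (?A x)))"
    unfolding num_edges_eq_sum_indicator
    by (rule Bochner_Integration.integral_sum) (rule measure_pmf.integrable_const_bound[where B = 1], auto)
  also have "\<dots> = (\<Sum>x\<in>vertex_pairs n. 1 - (1 - p\<^sup>2) ^ m)"
    using assms by (intro sum.cong refl) (auto simp: vertex_pairs_def measure_RIG_adj)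
  finally show ?thesis
    by simp
qed

lemma num_edges_normalizer_le:
  fixes n m :: nat and p \<sigma> :: real and w1 w2 :: "nat \<times> nat \<Rightarrow> bool"
  defines "ph \<equiv> 1 - (1 - p\<^sup>2) ^ m"
    and "\<mu> \<equiv> measure_pmf.expectation (RIG n m p) (\<lambda>w. real (num_edges n m w))"
  assumes "0 \<le> p" "p \<le> 1" "0 \<le> \<sigma>"
    and "(real (num_edges n m w1) - \<mu>) / \<sigma> \<le> -1" "1 < (real (num_edges n m w2) - \<mu>) / \<sigma>"
  shows "\<sigma> \<le> 2 * (real n ^ 2 * ph * (1 - ph))"
proof -
  define T where "T = real (card (vertex_pairs n))"
  have "0 \<le> 1 - p\<^sup>2" "1 - p\<^sup>2 \<le> 1"
    using assms(3,4) by (simp_all add: power_le_one)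
  then have ph: "0 \<le> ph" "ph \<le> 1"
    unfolding ph_def by (simp_all add: power_le_one)
  have "\<mu> = T * ph"
    unfolding \<mu>_def T_def ph_def using assms(3,4) by (rule expectation_num_edges)
  have "\<sigma> \<le> min \<mu> (T - \<mu>)"
    using num_edges_le_card_vertex_pairs[of n m w2] assms(5-7)
    by (intro normalizer_le_of_tails[of _ "real (num_edges n m w1)" "real (num_edges n m w2)"])
       (simp_all add: T_def)
  also have "min \<mu> (T - \<mu>) = T * min ph (1 - ph)"
    by (simp add: \<open>\<mu> = T * ph\<close> T_def min_mult_distrib_left algebra_simps)
  also have "\<dots> \<le> T * (2 * ph * (1 - ph))"
    using ph by (intro mult_left_mono min_le_twice_mult_compl) (simp_all add: T_def)
  also have "\<dots> \<le> real n ^ 2 * (2 * ph * (1 - ph))"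
    using ph card_vertex_pairs_le[of n] unfolding T_def
    by (intro mult_right_mono) (simp_all flip: of_nat_power)
  finally show ?thesis
    by (simp add: algebra_simps)
qed

theorem lemma7p6:
  fixes m :: "nat \<Rightarrow> nat" and p :: "nat \<Rightarrow> real"
  assumes p_range: "\<And>n. 0 < p n \<and> p n < 1"
  assumes clt: "weak_conv_m
     (\<lambda>n. distr (measure_pmf (RIG n (m n) (p n))) borel
        (\<lambda>w. (real (num_edges n (m n) w)
               - measure_pmf.expectation (RIG n (m n) (p n)) (\<lambda>w. real (num_edges n (m n) w)))
             / sqrt (measure_pmf.variance (RIG n (m n) (p n)) (\<lambda>w. real (num_edges n (m n) w)))))
     std_normal_distribution"
  shows "filterlim (\<lambda>n. let ph = 1 - (1 - (p n)\<^sup>2) ^ (m n) in real n ^ 2 * ph * (1 - ph))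
           at_top sequentially"
proof -
  define Q where "Q n = RIG n (m n) (p n)" for n
  define X where "X n w = real (num_edges n (m n) w)" for n w
  define \<mu> where "\<mu> n = measure_pmf.expectation (Q n) (\<lambda>w. X n w)" for n
  define \<sigma> where "\<sigma> n = sqrt (measure_pmf.variance (Q n) (\<lambda>w. X n w))" for n
  define ph where "ph n = 1 - (1 - (p n)\<^sup>2) ^ m n" for n
  have conv: "(\<lambda>n. measure_pmf.prob (Q n) {w. (X n w - \<mu> n) / \<sigma> n \<le> x})
      \<longlonglongrightarrow> cdf std_normal_distribution x" for x
    using clt isCont_std_normal_cdf[of x]
    unfolding weak_conv_m_def weak_conv_def Q_def X_def \<mu>_def \<sigma>_def
    by (simp add: cdf_distr_measure_pmf)
  have \<sigma>_nonneg: "0 \<le> \<sigma> n" for n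
    unfolding \<sigma>_def by (simp add: Bochner_Integration.integral_nonneg)
  have "filterlim \<sigma> at_top sequentially"
    using conv \<sigma>_nonneg strict_mono_std_normal_cdf
    by (intro filterlim_lattice_normalizer_at_top[where X = X]) (simp_all add: X_def)
  moreover have "eventually (\<lambda>n. \<sigma> n \<le> 2 * (real n ^ 2 * ph n * (1 - ph n))) sequentially"
    using eventually_normalized_tails[where Y = "\<lambda>n w. (X n w - \<mu> n) / \<sigma> n", OF conv std_normal_cdf_bounds]
  proof (rule eventually_mono, elim conjE exE)
    fix n w1 w2
    assume "(X n w1 - \<mu> n) / \<sigma> n \<le> -1" "1 < (X n w2 - \<mu> n) / \<sigma> n"
    then show "\<sigma> n \<le> 2 * (real n ^ 2 * ph n * (1 - ph n))"
      using p_range[of n] \<sigma>_nonneg[of n] unfolding ph_def X_def \<mu>_def Q_def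
      by (intro num_edges_normalizer_le) auto
  qed
  ultimately have "filterlim (\<lambda>n. 2 * (real n ^ 2 * ph n * (1 - ph n))) at_top sequentially"
    by (rule filterlim_at_top_mono)
  then show ?thesis
    unfolding Let_def ph_def[symmetric]
    by (simp add: filterlim_tendsto_pos_mult_at_top_iff[OF tendsto_const])
qed

end
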